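(* Let $\mathcal S\subset M_n$ be a matricial system (a self-adjoint subspace of $M_n$ containing $I_n$). Then $\mathrm{Ind}_{\mathrm{CP}}(M_n:\mathcal S)^{-1}$ equals the optimal value of the semidefinite program $$\begin{aligned}&\text{maximize } \lambda\quad(\lambda\in\mathbb R,\ X\in M_n\otimes M_n)\\ &\text{subject to } (\mathrm{tr}\otimes\mathrm{id})(X)=(1-\lambda)I_n,\\ &\qquad X+\lambda\Delta_n\in M_n\otimes\mathcal S,\\ &\qquad X\in(M_n\otimes M_n)^+,\end{aligned}$$ where $\Delta_n=\sum_{i,j=1}^nE_{ij}\otimes E_{ij}$.
   Context: $E_{ij}$ are the matrix units of $M_n$, $\mathrm{tr}$ is the (unnormalized) trace on $M_n$, and $\mathrm{tr}\otimes\mathrm{id}:M_n\otimes M_n\to M_n$ is the partial trace over the first factor. $M_n\otimes\mathcal S$ is the subspace of $M_n\otimes M_n$ spanned by $A\otimes B$, $A\in M_n$, $B\in\mathcal S$. For an operator system $\mathcal X$ with unit $1$, $\mathrm{CP}_1(\mathcal X)$ is the set of completely positive $\varphi:\mathcal X\to\mathcal X$ with $\varphi(\mathbb C1)\subset\mathbb C1$, and for a subsystem $\mathcal X_0$, $\mathrm{Ind}_{\mathrm{CP}}(\mathcal X:\mathcal X_0)=\inf\{\|\varphi(1)\|:\varphi\in\mathrm{CP}_1(\mathcal X),\ \varphi(\mathcal X)\subset\mathcal X_0,\ \varphi-\mathrm{id}_{\mathcal X}\text{ completely positive}\}$. *)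

theory Defs
  imports Complex_Main "Jordan_Normal_Form.Matrix"
begin

text \<open>M_n \<otimes> M_n is identified with M_{n*n} via the Kronecker product, with the
  first tensor factor as the "outer" (block) index: (A \<otimes> B) at (i*n+k, j*n+l) is A(i,j)*B(k,l).\<close>

definition cadj :: "complex mat \<Rightarrow> complex mat" where
  "cadj A = mat (dim_col A) (dim_row A) (\<lambda>(i,j). cnj (A $$ (j,i)))"

definition psd :: "nat \<Rightarrow> complex mat \<Rightarrow> bool" where
  "psd m A \<longleftrightarrow> A \<in> carrier_mat m m \<and>
     (\<forall>v \<in> carrier_vec m. let q = (\<Sum>i<m. cnj (v $ i) * (A *\<^sub>v v) $ i) in Im q = 0 \<and> Re q \<ge> 0)"

definition vnorm :: "complex vec \<Rightarrow> real" where
  "vnorm v = sqrt (\<Sum>i<dim_vec v. (cmod (v $ i))\<^sup>2)"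

definition opnorm :: "nat \<Rightarrow> complex mat \<Rightarrow> real" where
  "opnorm n A = Sup {vnorm (A *\<^sub>v v) | v. v \<in> carrier_vec n \<and> vnorm v \<le> 1}"

definition matricial_system :: "nat \<Rightarrow> complex mat set \<Rightarrow> bool" where
  "matricial_system n S \<longleftrightarrow> S \<subseteq> carrier_mat n n \<and> 1\<^sub>m n \<in> S \<and>
     (\<forall>A\<in>S. \<forall>B\<in>S. A + B \<in> S) \<and> (\<forall>c. \<forall>A\<in>S. c \<cdot>\<^sub>m A \<in> S) \<and>
     (\<forall>A\<in>S. cadj A \<in> S)"

definition lin_map :: "nat \<Rightarrow> (complex mat \<Rightarrow> complex mat) \<Rightarrow> bool" where
  "lin_map n \<phi> \<longleftrightarrow> (\<forall>A \<in> carrier_mat n n. \<phi> A \<in> carrier_mat n n) \<and>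
     (\<forall>A \<in> carrier_mat n n. \<forall>B \<in> carrier_mat n n. \<phi> (A + B) = \<phi> A + \<phi> B) \<and>
     (\<forall>c. \<forall>A \<in> carrier_mat n n. \<phi> (c \<cdot>\<^sub>m A) = c \<cdot>\<^sub>m \<phi> A)"

definition block :: "nat \<Rightarrow> complex mat \<Rightarrow> nat \<Rightarrow> nat \<Rightarrow> complex mat" where
  "block n P a b = mat n n (\<lambda>(i,j). P $$ (a*n+i, b*n+j))"

text \<open>The amplification \<phi>^{(k)} = id_k \<otimes> \<phi> : M_k(M_n) \<rightarrow> M_k(M_n).\<close>
definition ampl :: "nat \<Rightarrow> nat \<Rightarrow> (complex mat \<Rightarrow> complex mat) \<Rightarrow> complex mat \<Rightarrow> complex mat" where
  "ampl n k \<phi> P = mat (k*n) (k*n) (\<lambda>(r,c). \<phi> (block n P (r div n) (c div n)) $$ (r mod n, c mod n))"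

definition comp_pos :: "nat \<Rightarrow> (complex mat \<Rightarrow> complex mat) \<Rightarrow> bool" where
  "comp_pos n \<phi> \<longleftrightarrow> lin_map n \<phi> \<and>
     (\<forall>k P. psd (k*n) P \<longrightarrow> psd (k*n) (ampl n k \<phi> P))"

definition CP1 :: "nat \<Rightarrow> (complex mat \<Rightarrow> complex mat) set" where
  "CP1 n = {\<phi>. comp_pos n \<phi> \<and> (\<forall>c. \<exists>d. \<phi> (c \<cdot>\<^sub>m 1\<^sub>m n) = d \<cdot>\<^sub>m 1\<^sub>m n)}"

definition Ind_CP :: "nat \<Rightarrow> complex mat set \<Rightarrow> real" where
  "Ind_CP n S = Inf {opnorm n (\<phi> (1\<^sub>m n)) | \<phi>. \<phi> \<in> CP1 n \<and>
      (\<forall>A \<in> carrier_mat n n. \<phi> A \<in> S) \<and> comp_pos n (\<lambda>A. \<phi> A - A)}"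

definition kron :: "nat \<Rightarrow> complex mat \<Rightarrow> complex mat \<Rightarrow> complex mat" where
  "kron n A B = mat (n*n) (n*n) (\<lambda>(r,c). A $$ (r div n, c div n) * B $$ (r mod n, c mod n))"

fun msum :: "nat \<Rightarrow> nat \<Rightarrow> (nat \<Rightarrow> complex mat) \<Rightarrow> complex mat" where
  "msum d 0 f = 0\<^sub>m d d"
| "msum d (Suc m) f = msum d m f + f m"

definition Eunit :: "nat \<Rightarrow> nat \<Rightarrow> nat \<Rightarrow> complex mat" where
  "Eunit n i j = mat n n (\<lambda>(r,c). if r = i \<and> c = j then 1 else 0)"

definition Delta :: "nat \<Rightarrow> complex mat" where
  "Delta n = msum (n*n) n (\<lambda>i. msum (n*n) n (\<lambda>j. kron n (Eunit n i j) (Eunit n i j)))"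

text \<open>Partial trace over the first factor, (tr \<otimes> id) : M_n \<otimes> M_n \<rightarrow> M_n.\<close>
definition ptrace1 :: "nat \<Rightarrow> complex mat \<Rightarrow> complex mat" where
  "ptrace1 n X = mat n n (\<lambda>(k,l). \<Sum>i<n. X $$ (i*n+k, i*n+l))"

definition tensor_span :: "nat \<Rightarrow> complex mat set \<Rightarrow> complex mat set" where
  "tensor_span n S = {X. \<exists>m A B. (\<forall>i<m. A i \<in> carrier_mat n n \<and> B i \<in> S) \<and>
      X = msum (n*n) m (\<lambda>i. kron n (A i) (B i))}"

definition sdp_value :: "nat \<Rightarrow> complex mat set \<Rightarrow> real" where
  "sdp_value n S = Sup {lam. \<exists>X. X \<in> carrier_mat (n*n) (n*n) \<and>
      ptrace1 n X = complex_of_real (1 - lam) \<cdot>\<^sub>m 1\<^sub>m n \<and>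
      X + complex_of_real lam \<cdot>\<^sub>m Delta n \<in> tensor_span n S \<and>
      psd (n*n) X}"

end

theory Submission
  imports Defs
begin

text \<open>Both inequalities come from the Choi correspondence \<open>\<phi> \<mapsto> C(\<phi>) = (id \<otimes> \<phi>)(\<Delta>\<^sub>n)\<close>.
  If \<open>\<phi>\<close> is admissible, then \<open>\<phi>(1) = c 1\<close> with \<open>c \<ge> 1\<close>, and \<open>X = c\<^sup>-\<^sup>1 C(\<phi> - id)\<close> is feasible
  with \<open>\<lambda> = c\<^sup>-\<^sup>1\<close>: it is positive because \<open>\<phi> - id\<close> is completely positive, its partial trace is
  \<open>c\<^sup>-\<^sup>1 (\<phi> - id)(1)\<close>, and the blocks \<open>c\<^sup>-\<^sup>1 \<phi>(E\<^sub>i\<^sub>j)\<close> of \<open>X + \<lambda>\<Delta>\<^sub>n = c\<^sup>-\<^sup>1 C(\<phi>)\<close> lie in \<open>\<S>\<close>.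
  Conversely, a feasible \<open>(\<lambda>, X)\<close> with \<open>\<lambda> > 0\<close> is the data of the map with Choi matrix
  \<open>\<lambda>\<^sup>-\<^sup>1X + \<Delta>\<^sub>n\<close>, which is admissible with \<open>\<phi>(1) = \<lambda>\<^sup>-\<^sup>1 1\<close>; complete positivity of a map with
  positive Choi matrix holds because a positive matrix is a sum of rank-one positive matrices.
  As \<open>\<lambda> = n\<^sup>-\<^sup>2\<close> is always feasible, the infimum and the supremum are reciprocal.\<close>

section \<open>Positive semidefinite forms\<close>

definition nonneg :: "complex \<Rightarrow> bool" where
  "nonneg z \<longleftrightarrow> Im z = 0 \<and> 0 \<le> Re z"

definition qform :: "nat \<Rightarrow> (nat \<Rightarrow> nat \<Rightarrow> complex) \<Rightarrow> (nat \<Rightarrow> complex) \<Rightarrow> complex" where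
  "qform m F v = (\<Sum>i<m. cnj (v i) * (\<Sum>j<m. F i j * v j))"

definition psd_form :: "nat \<Rightarrow> (nat \<Rightarrow> nat \<Rightarrow> complex) \<Rightarrow> bool" where
  "psd_form m F \<longleftrightarrow> (\<forall>v. nonneg (qform m F v))"

lemma nonneg_sum: "(\<And>x. x \<in> A \<Longrightarrow> nonneg (f x)) \<Longrightarrow> nonneg (sum f A)"
  unfolding nonneg_def by (simp add: sum_nonneg)

lemma cnj_mult_self: "cnj z * z = complex_of_real ((cmod z)\<^sup>2)"
  by (metis complex_norm_square mult.commute)

lemma nonneg_cnj_mult_self: "nonneg (cnj z * z)"
  by (simp add: cnj_mult_self nonneg_def)

lemma nonneg_iff_of_real: "nonneg z \<longleftrightarrow> (\<exists>r\<ge>0. z = complex_of_real r)"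
  by (auto simp: nonneg_def complex_eq_iff)

lemma qform_cong: "(\<And>i j. i < m \<Longrightarrow> j < m \<Longrightarrow> F i j = G i j) \<Longrightarrow> qform m F v = qform m G v"
  unfolding qform_def by (intro sum.cong refl) simp

lemma qform_lin: "qform m (\<lambda>i j. a * F i j + b * G i j) v = a * qform m F v + b * qform m G v"
  by (simp add: qform_def distrib_left distrib_right sum.distrib sum_distrib_left mult_ac)

lemma mult_if_zero_right: "(x::complex) * (if P then y else 0) = (if P then x * y else 0)" by simp
lemma mult_if_zero_left: "(if P then y else 0) * (x::complex) = (if P then y * x else 0)" by simp
lemma cnj_if_zero: "cnj (if P then y else 0) = (if P then cnj y else 0)" by simp
lemma sum_if_zero: "(\<Sum>x\<in>A. if P then f x else (0::complex)) = (if P then (\<Sum>x\<in>A. f x) else 0)"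
  by simp
lemmas if_zero_simps = mult_if_zero_right mult_if_zero_left cnj_if_zero sum_if_zero

lemma qform_unit:
  assumes "i < m"
  shows "qform m F (\<lambda>x. if x = i then a else 0) = cnj a * F i i * a"
  using assms by (simp add: qform_def if_zero_simps sum.delta)

lemma qform_two_units:
  assumes "i < m" "j < m" "i \<noteq> j"
  shows "qform m F (\<lambda>x. (if x = i then a else 0) + (if x = j then b else 0)) =
     cnj a * (F i i * a + F i j * b) + cnj b * (F j i * a + F j j * b)"
  using assms by (simp add: qform_def distrib_left distrib_right sum.distrib if_zero_simps sum.delta)

lemma qform_shift:
  assumes "t < m"
  shows "qform m R (\<lambda>x. v x + (if x = t then s else 0)) = qform m R v + cnj s * (\<Sum>j<m. R t j * v j)
     + (\<Sum>i<m. cnj (v i) * R i t) * s + cnj s * R t t * s"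
  using assms by (simp add: qform_def distrib_left distrib_right sum.distrib if_zero_simps sum.delta
      sum_distrib_left sum_distrib_right mult_ac)

lemma qform_minus_rank_one:
  "qform m (\<lambda>i j. R i j - u i * cnj (u j)) v =
     qform m R v - (\<Sum>i<m. cnj (v i) * u i) * cnj (\<Sum>i<m. cnj (v i) * u i)"
  by (simp add: qform_def right_diff_distrib left_diff_distrib sum_subtractf sum_distrib_left
      sum_distrib_right mult_ac) (rule sum.swap)

lemma psd_form_diag_nonneg: assumes "psd_form m F" "i < m" shows "nonneg (F i i)"
proof -
  have "nonneg (qform m F (\<lambda>x. if x = i then 1 else 0))" using assms(1) unfolding psd_form_def ..
  then show ?thesis using qform_unit[OF assms(2), of F 1] by simp
qed

lemma psd_form_hermitian:
  assumes F: "psd_form m F" and "i < m" "j < m"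
  shows "F i j = cnj (F j i)"
proof (cases "i = j")
  case True
  then show ?thesis using psd_form_diag_nonneg[OF F \<open>i < m\<close>] by (simp add: nonneg_def complex_eq_iff)
next
  case False
  have diag: "Im (F i i) = 0" "Im (F j j) = 0"
    using psd_form_diag_nonneg[OF F \<open>i < m\<close>] psd_form_diag_nonneg[OF F \<open>j < m\<close>] by (auto simp: nonneg_def)
  have "nonneg (qform m F (\<lambda>x. (if x = i then 1 else 0) + (if x = j then b else 0)))" for b
    using F unfolding psd_form_def by blast
  then have "nonneg (cnj 1 * (F i i * 1 + F i j * b) + cnj b * (F j i * 1 + F j j * b))" for b
    using qform_two_units[OF assms(2,3) False, of F 1] by simp
  from this[of 1] this[of \<i>] have "Im (F i j) + Im (F j i) = 0" "Re (F i j) - Re (F j i) = 0"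
    using diag by (simp_all add: nonneg_def algebra_simps)
  then show ?thesis by (simp add: complex_eq_iff)
qed

text \<open>A zero diagonal entry forces the whole row to vanish: otherwise the form is negative on
  \<open>s e\<^sub>t + e\<^sub>j\<close> for a suitable \<open>s\<close>.\<close>
lemma psd_form_zero_row:
  assumes F: "psd_form m F" and "t < m" "F t t = 0" "j < m"
  shows "F t j = 0"
proof (rule ccontr)
  assume nz: "F t j \<noteq> 0"
  then have jt: "j \<noteq> t" using assms by auto
  define z where "z = F t j"
  have herm: "F j t = cnj z" using psd_form_hermitian[OF F \<open>j < m\<close> \<open>t < m\<close>] z_def by simp
  define x :: real where "x = (Re (F j j) + 1) / (2 * (cmod z)^2)"
  have zpos: "(cmod z)^2 > 0" using nz z_def by simp
  define s where "s = - complex_of_real x * z"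
  have "nonneg (qform m F (\<lambda>y. (if y = t then s else 0) + (if y = j then 1 else 0)))"
    using F unfolding psd_form_def by blast
  then have nn: "nonneg (cnj s * (F t t * s + F t j) + (F j t * s + F j j))"
    using qform_two_units[OF \<open>t < m\<close> \<open>j < m\<close> jt[symmetric], of F s 1] by simp
  have "cnj s * (F t t * s + F t j) + (F j t * s + F j j) = F j j - 2 * complex_of_real x * (z * cnj z)"
    using assms(3) herm z_def s_def by (simp add: algebra_simps)
  also have "\<dots> = F j j - complex_of_real (2 * x * (cmod z)^2)"
    by (simp flip: complex_norm_square)
  finally have eq: "cnj s * (F t t * s + F t j) + (F j t * s + F j j) =
      F j j - complex_of_real (2 * x * (cmod z)^2)" .
  have "2 * x * (cmod z)^2 = Re (F j j) + 1" using zpos x_def by (simp add: field_simps)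
  then show False using nn unfolding eq by (simp add: nonneg_def)
qed

text \<open>One step of a Cholesky factorisation: subtracting \<open>u u\<^sup>*\<close> with \<open>u = F e\<^sub>t / \<surd>F\<^sub>t\<^sub>t\<close> preserves
  positivity, since the new form at \<open>v\<close> equals the old one at \<open>v - (\<langle>F e\<^sub>t, v\<rangle>/F\<^sub>t\<^sub>t) e\<^sub>t\<close>.\<close>
lemma psd_form_minus_rank_one:
  assumes F: "psd_form m F" and t: "t < m" and r: "F t t = complex_of_real r" and rpos: "r > 0"
  shows "psd_form m (\<lambda>i j. F i j - F i t / sqrt r * cnj (F j t / sqrt r))"
  unfolding psd_form_def
proof
  fix v
  define u where "u = (\<lambda>i. F i t / complex_of_real (sqrt r))"
  define g where "g = (\<Sum>j<m. F t j * v j)"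
  have hg: "(\<Sum>i<m. cnj (v i) * F i t) = cnj g"
    unfolding g_def by (simp add: psd_form_hermitian[OF F _ t] mult.commute)
  have hw: "(\<Sum>i<m. cnj (v i) * u i) = cnj g / complex_of_real (sqrt r)"
    unfolding u_def using hg by (simp add: sum_divide_distrib[symmetric] mult.commute)
  have sq: "(complex_of_real (sqrt r))^2 = complex_of_real r"
    using rpos by (metis of_real_power less_imp_le real_sqrt_pow2)
  have "qform m (\<lambda>i j. F i j - u i * cnj (u j)) v = qform m F v - cnj g * g / complex_of_real r"
    unfolding qform_minus_rank_one hw using rpos sq by (simp add: field_simps power2_eq_square[symmetric])
  also have "\<dots> = qform m F (\<lambda>x. v x + (if x = t then - g / complex_of_real r else 0))"
    unfolding qform_shift[OF t] g_def[symmetric] hg r using rpos by (simp add: field_simps)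
  finally show "nonneg (qform m (\<lambda>i j. F i j - F i t / sqrt r * cnj (F j t / sqrt r)) v)"
    using F unfolding psd_form_def u_def by auto
qed

lemma psd_form_split_rank_one:
  assumes R: "psd_form m R" and t: "t < m" and Z: "\<forall>i<m. \<forall>j<m. i < t \<or> j < t \<longrightarrow> R i j = 0"
  obtains u R' where "psd_form m R'" "\<forall>i<m. \<forall>j<m. R i j = u i * cnj (u j) + R' i j"
    "\<forall>i<m. \<forall>j<m. i < Suc t \<or> j < Suc t \<longrightarrow> R' i j = 0"
proof -
  obtain r where r: "R t t = complex_of_real r" "r \<ge> 0"
    using psd_form_diag_nonneg[OF R t] by (auto simp: nonneg_iff_of_real)
  show ?thesis
  proof (cases "r = 0")
    case True
    have row: "R t j = 0" if "j < m" for j using psd_form_zero_row[OF R t _ that] r True by simp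
    have col: "R i t = 0" if "i < m" for i using psd_form_hermitian[OF R that t] row[OF that] by simp
    show ?thesis using R Z row col by (intro that[of R "\<lambda>_. 0"]) (auto simp: less_Suc_eq)
  next
    case False
    define u where "u = (\<lambda>i. R i t / complex_of_real (sqrt r))"
    have rpos: "r > 0" using False r by simp
    have sq: "complex_of_real (sqrt r) * complex_of_real (sqrt r) = complex_of_real r"
      unfolding of_real_mult[symmetric] using rpos by simp
    have "R i j - u i * cnj (u j) = 0" if ij: "i < m" "j < m" "i < Suc t \<or> j < Suc t" for i j
    proof -
      consider "i < t \<or> j < t" | "i = t" | "j = t" using ij by linarith
      then show ?thesis
      proof cases
        case 1
        then show ?thesis using Z ij t unfolding u_def by auto
      next
        case 2
        then show ?thesis using r(1) sq rpos psd_form_hermitian[OF R t ij(2)]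
          unfolding u_def by (simp add: field_simps)
      next
        case 3
        then show ?thesis using r(1) sq rpos psd_form_hermitian[OF R ij(1) t]
          unfolding u_def by (simp add: field_simps)
      qed
    qed
    then show ?thesis using psd_form_minus_rank_one[OF R t r(1) rpos]
      by (intro that[of "\<lambda>i j. R i j - u i * cnj (u j)" u]) (auto simp: u_def)
  qed
qed

lemma psd_form_gram_partial:
  assumes "psd_form m A" "t \<le> m"
  shows "\<exists>U R. psd_form m R \<and> (\<forall>i<m. \<forall>j<m. A i j = (\<Sum>r<t. U r i * cnj (U r j)) + R i j)
     \<and> (\<forall>i<m. \<forall>j<m. i < t \<or> j < t \<longrightarrow> R i j = 0)"
  using assms(2)
proof (induction t)
  case 0
  then show ?case using assms(1) by (intro exI[of _ "\<lambda>_ _. 0"] exI[of _ A]) auto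
next
  case (Suc t)
  then obtain U R where R: "psd_form m R"
    and AU: "\<forall>i<m. \<forall>j<m. A i j = (\<Sum>r<t. U r i * cnj (U r j)) + R i j"
    and Z: "\<forall>i<m. \<forall>j<m. i < t \<or> j < t \<longrightarrow> R i j = 0" by auto
  have t: "t < m" using Suc.prems by simp
  obtain u R' where "psd_form m R'" "\<forall>i<m. \<forall>j<m. R i j = u i * cnj (u j) + R' i j"
    "\<forall>i<m. \<forall>j<m. i < Suc t \<or> j < Suc t \<longrightarrow> R' i j = 0"
    by (rule psd_form_split_rank_one[OF R t Z])
  then show ?case using AU by (intro exI[of _ "U(t := u)"] exI[of _ R']) auto
qed

lemma psd_form_gram:
  assumes "psd_form m A"
  obtains U where "\<And>i j. i < m \<Longrightarrow> j < m \<Longrightarrow> A i j = (\<Sum>r<m. U r i * cnj (U r j))"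
  using psd_form_gram_partial[OF assms order.refl] by fastforce

lemma mult_mat_vec_entry:
  assumes "A \<in> carrier_mat m m" "v \<in> carrier_vec m" "i < m"
  shows "(A *\<^sub>v v) $ i = (\<Sum>j<m. A $$ (i,j) * v $ j)"
  using assms by (simp add: scalar_prod_def atLeast0LessThan)

lemma one_smult_mat: "(1::'a::semiring_1) \<cdot>\<^sub>m A = A"
  by (intro eq_matI) auto

lemma psd_iff_psd_form: "psd m A \<longleftrightarrow> A \<in> carrier_mat m m \<and> psd_form m (\<lambda>i j. A $$ (i,j))"
proof -
  have quad: "(\<Sum>i<m. cnj (v $ i) * (A *\<^sub>v v) $ i) = qform m (\<lambda>i j. A $$ (i,j)) (\<lambda>i. v $ i)"
    if "A \<in> carrier_mat m m" "v \<in> carrier_vec m" for v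
    unfolding qform_def by (intro sum.cong refl) (simp add: mult_mat_vec_entry[OF that])
  have "psd_form m F \<longleftrightarrow> (\<forall>v \<in> carrier_vec m. nonneg (qform m F (\<lambda>i. v $ i)))" for F
  proof
    assume "\<forall>v \<in> carrier_vec m. nonneg (qform m F (\<lambda>i. v $ i))"
    then have "nonneg (qform m F (\<lambda>i. vec m v $ i))" for v by simp
    moreover have "qform m F (\<lambda>i. vec m v $ i) = qform m F v" for v by (simp add: qform_def)
    ultimately show "psd_form m F" unfolding psd_form_def by simp
  qed (simp add: psd_form_def)
  then show ?thesis
    unfolding psd_def Let_def nonneg_def[symmetric] by (metis quad)
qed

lemma psd_smult: assumes "psd m A" "a \<ge> 0" shows "psd m (complex_of_real a \<cdot>\<^sub>m A)"
proof -
  have A: "A \<in> carrier_mat m m" "psd_form m (\<lambda>i j. A $$ (i,j))" using assms(1) by (simp_all add: psd_iff_psd_form)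
  have "qform m (\<lambda>i j. (complex_of_real a \<cdot>\<^sub>m A) $$ (i,j)) v =
      qform m (\<lambda>i j. complex_of_real a * A $$ (i,j) + 0 * A $$ (i,j)) v" for v
    using A(1) by (intro qform_cong) auto
  then have "qform m (\<lambda>i j. (complex_of_real a \<cdot>\<^sub>m A) $$ (i,j)) v =
      complex_of_real a * qform m (\<lambda>i j. A $$ (i,j)) v" for v
    by (simp only: qform_lin) simp
  then show ?thesis using A assms(2) by (simp add: psd_iff_psd_form psd_form_def nonneg_def)
qed

lemma psd_add: assumes "psd m A" "psd m B" shows "psd m (A + B)"
proof -
  have A: "A \<in> carrier_mat m m" "psd_form m (\<lambda>i j. A $$ (i,j))"
    and B: "B \<in> carrier_mat m m" "psd_form m (\<lambda>i j. B $$ (i,j))"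
    using assms by (simp_all add: psd_iff_psd_form)
  have "qform m (\<lambda>i j. (A + B) $$ (i,j)) v =
      qform m (\<lambda>i j. 1 * A $$ (i,j) + 1 * B $$ (i,j)) v" for v
    using A(1) B(1) by (intro qform_cong) auto
  then have "qform m (\<lambda>i j. (A + B) $$ (i,j)) v =
      qform m (\<lambda>i j. A $$ (i,j)) v + qform m (\<lambda>i j. B $$ (i,j)) v" for v
    by (simp only: qform_lin) simp
  then show ?thesis using A B by (simp add: psd_iff_psd_form psd_form_def nonneg_def)
qed

lemma block_index_less: "i < k \<Longrightarrow> t < n \<Longrightarrow> i*n + t < k*(n::nat)"
proof -
  assume "i < k" "t < n"
  then have "i*n + t < (i+1)*n" by simp
  also have "\<dots> \<le> k*n" using \<open>i < k\<close> by (intro mult_le_mono1) simp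
  finally show ?thesis .
qed

lemma block_index_div: "t < n \<Longrightarrow> (a*n + t) div n = (a::nat)"
  and block_index_mod: "t < n \<Longrightarrow> (a*n + t) mod n = t"
  by auto

lemma block_index_eq_iff: "k < n \<Longrightarrow> l < n \<Longrightarrow> a*n + k = b*n + (l::nat) \<longleftrightarrow> a = b \<and> k = l"
  by (metis block_index_div block_index_mod)

lemma div_less_square: "r < n*n \<Longrightarrow> r div n < (n::nat)"
  by (simp add: less_mult_imp_div_less)

lemma mod_less_square: "r < n*n \<Longrightarrow> r mod n < (n::nat)"
  by (cases n) auto

lemmas block_index_simps = block_index_less block_index_div block_index_mod

lemma sum_lessThan_mult: "(\<Sum>r<k*n. f r) = (\<Sum>a<k. \<Sum>t<n. f (a*n + t :: nat) :: 'b::comm_monoid_add)"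
proof (induction k)
  case (Suc k)
  have "{..<Suc k * n} = {..<k*n} \<union> {k*n..<k*n+n}" by auto
  then have "(\<Sum>r<Suc k*n. f r) = (\<Sum>r<k*n. f r) + (\<Sum>r\<in>{k*n..<k*n+n}. f r)"
    by (simp add: sum.union_disjoint ivl_disj_int)
  also have "(\<Sum>r\<in>{k*n..<k*n+n}. f r) = (\<Sum>t<n. f (k*n+t))"
    using sum.shift_bounds_nat_ivl[of f 0 "k*n" n] by (simp add: atLeast0LessThan add.commute)
  finally show ?case using Suc by simp
qed simp

lemma sum_delta_2:
  "x < (n::nat) \<Longrightarrow> y < n \<Longrightarrow> (\<Sum>i<n. \<Sum>j<n. if x = i \<and> y = j then g i j else (0::complex)) = g x y"
proof -
  assume "x < n" "y < n"
  then have "(\<Sum>i<n. \<Sum>j<n. if x = i \<and> y = j then g i j else (0::complex)) = (\<Sum>i<n. if x = i then g i y else 0)"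
    by (intro sum.cong refl) (auto simp: sum.delta')
  also have "\<dots> = g x y" using \<open>x < n\<close> by (simp add: sum.delta)
  finally show ?thesis .
qed

lemma block_carrier [simp]: "block n P a b \<in> carrier_mat n n"
  and block_dims [simp]: "dim_row (block n P a b) = n" "dim_col (block n P a b) = n"
  by (simp_all add: block_def)

lemma msum_carrier: "(\<And>i. i < m \<Longrightarrow> f i \<in> carrier_mat d d) \<Longrightarrow> msum d m f \<in> carrier_mat d d"
  by (induction m) auto

lemma msum_dims:
  assumes "\<And>i. i < m \<Longrightarrow> f i \<in> carrier_mat d d"
  shows "dim_row (msum d m f) = d" "dim_col (msum d m f) = d"
proof -
  have "msum d m f \<in> carrier_mat d d" using assms by (rule msum_carrier)
  then show "dim_row (msum d m f) = d" "dim_col (msum d m f) = d" by auto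
qed

lemma msum_cong: "(\<And>i. i < m \<Longrightarrow> f i = g i) \<Longrightarrow> msum d m f = msum d m g"
  by (induction m) auto

lemma msum_index:
  "(\<And>i. i < m \<Longrightarrow> f i \<in> carrier_mat d d) \<Longrightarrow> i < d \<Longrightarrow> j < d \<Longrightarrow>
    msum d m f $$ (i,j) = (\<Sum>s<m. f s $$ (i,j))"
proof (induction m)
  case (Suc m)
  have "msum d m f \<in> carrier_mat d d" "f m \<in> carrier_mat d d"
    using Suc.prems by (auto intro: msum_carrier)
  then have "(msum d m f + f m) $$ (i,j) = msum d m f $$ (i,j) + f m $$ (i,j)"
    using Suc.prems(2,3) by simp
  then show ?case using Suc by simp
qed simp

lemma Eunit_carrier [simp]: "Eunit n i j \<in> carrier_mat n n"
  and Eunit_dims [simp]: "dim_row (Eunit n i j) = n" "dim_col (Eunit n i j) = n"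
  by (simp_all add: Eunit_def)

lemma kron_carrier [simp]: "kron n A B \<in> carrier_mat (n*n) (n*n)"
  by (simp add: kron_def)

lemma mat_eq_msum_Eunit:
  assumes A: "A \<in> carrier_mat n n"
  shows "A = msum n n (\<lambda>i. msum n n (\<lambda>j. A $$ (i,j) \<cdot>\<^sub>m Eunit n i j))"
    (is "A = ?M")
proof -
  have M: "?M \<in> carrier_mat n n" by (intro msum_carrier) auto
  show ?thesis
  proof (rule eq_matI)
    fix k l assume "k < dim_row ?M" "l < dim_col ?M"
    then have kl: "k < n" "l < n" using M by auto
    have "?M $$ (k,l) = (\<Sum>i<n. \<Sum>j<n. A $$ (i,j) * Eunit n i j $$ (k,l))"
      using kl by (simp add: msum_index msum_carrier)
    also have "\<dots> = (\<Sum>i<n. \<Sum>j<n. if k = i \<and> l = j then A $$ (i,j) else 0)"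
      using kl by (intro sum.cong refl) (auto simp: Eunit_def)
    also have "\<dots> = A $$ (k,l)" using kl by (rule sum_delta_2)
    finally show "A $$ (k,l) = ?M $$ (k,l)" by simp
  qed (use A M in auto)
qed

lemma lin_map_carrier: "lin_map n \<phi> \<Longrightarrow> A \<in> carrier_mat n n \<Longrightarrow> \<phi> A \<in> carrier_mat n n"
  by (simp add: lin_map_def)

lemma lin_map_zero: assumes "lin_map n \<phi>" shows "\<phi> (0\<^sub>m n n) = 0\<^sub>m n n"
proof -
  have "\<phi> (0\<^sub>m n n) = \<phi> ((0::complex) \<cdot>\<^sub>m 0\<^sub>m n n)" by simp
  also have "\<dots> = 0 \<cdot>\<^sub>m \<phi> (0\<^sub>m n n)" using assms zero_carrier_mat[of n n] unfolding lin_map_def by blast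
  also have "\<dots> = 0\<^sub>m n n" using lin_map_carrier[OF assms zero_carrier_mat] by (intro eq_matI) auto
  finally show ?thesis .
qed

lemma lin_map_msum:
  assumes lin: "lin_map n \<phi>" and f: "\<And>i. i < m \<Longrightarrow> f i \<in> carrier_mat n n"
  shows "\<phi> (msum n m f) = msum n m (\<lambda>i. \<phi> (f i))"
  using f
proof (induction m)
  case (Suc m)
  have "msum n m f \<in> carrier_mat n n" "f m \<in> carrier_mat n n" using Suc.prems by (auto intro: msum_carrier)
  then have "\<phi> (msum n (Suc m) f) = \<phi> (msum n m f) + \<phi> (f m)"
    using lin by (simp add: lin_map_def)
  then show ?case using Suc by simp
qed (simp add: lin_map_zero[OF lin])

lemma comp_pos_cong:
  assumes eq: "\<And>A. A \<in> carrier_mat n n \<Longrightarrow> \<phi> A = \<psi> A" and cp: "comp_pos n \<phi>"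
  shows "comp_pos n \<psi>"
proof -
  have lin: "lin_map n \<phi>" using cp by (simp add: comp_pos_def)
  have "lin_map n \<psi>" unfolding lin_map_def
  proof (intro conjI ballI allI)
    fix A B :: "complex mat" and c :: complex
    assume A: "A \<in> carrier_mat n n" and B: "B \<in> carrier_mat n n"
    show "\<psi> A \<in> carrier_mat n n" using lin_map_carrier[OF lin A] eq[OF A] by simp
    show "\<psi> (A + B) = \<psi> A + \<psi> B"
      using lin A B eq[OF A] eq[OF B] eq[of "A + B"] by (simp add: lin_map_def)
    show "\<psi> (c \<cdot>\<^sub>m A) = c \<cdot>\<^sub>m \<psi> A"
      using lin A eq[OF A] eq[of "c \<cdot>\<^sub>m A"] by (simp add: lin_map_def)
  qed
  moreover have "ampl n k \<phi> P = ampl n k \<psi> P" for k P by (simp add: ampl_def eq)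
  ultimately show ?thesis using cp unfolding comp_pos_def by simp
qed

section \<open>The Choi correspondence\<close>

lemma Delta_carrier: "Delta n \<in> carrier_mat (n*n) (n*n)"
  unfolding Delta_def by (intro msum_carrier) simp

lemma Delta_dims [simp]: "dim_row (Delta n) = n*n" "dim_col (Delta n) = n*n"
  using Delta_carrier[of n] by auto

lemma Delta_entry:
  assumes "r < n*n" "c < n*n"
  shows "Delta n $$ (r,c) = (if r div n = r mod n \<and> c div n = c mod n then 1 else 0)"
proof -
  have "Delta n $$ (r,c) = (\<Sum>i<n. \<Sum>j<n. kron n (Eunit n i j) (Eunit n i j) $$ (r,c))"
    unfolding Delta_def using assms by (simp add: msum_index msum_carrier)
  also have "\<dots> = (\<Sum>i<n. \<Sum>j<n. if r div n = i \<and> c div n = j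
      then (if r mod n = r div n \<and> c mod n = c div n then 1 else 0) else 0)"
    using assms div_less_square mod_less_square by (intro sum.cong refl) (auto simp: kron_def Eunit_def)
  also have "\<dots> = (if r div n = r mod n \<and> c div n = c mod n then 1 else 0)"
    using div_less_square[OF assms(1)] div_less_square[OF assms(2)] by (subst sum_delta_2) auto
  finally show ?thesis .
qed

lemma block_Delta: assumes "a < n" "b < n" shows "block n (Delta n) a b = Eunit n a b"
  by (rule eq_matI) (use assms in \<open>simp_all add: block_def Delta_entry Eunit_def block_index_simps\<close>)

text \<open>\<open>\<Delta>\<^sub>n\<close> is \<open>n\<close> times the projection onto the maximally entangled vector \<open>\<Sum>\<^sub>b e\<^sub>b \<otimes> e\<^sub>b\<close>.\<close>
lemma qform_Delta:
  "qform (n*n) (\<lambda>i j. Delta n $$ (i,j)) v = cnj (\<Sum>b<n. v (b*n+b)) * (\<Sum>b<n. v (b*n+b))"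
proof -
  define S where "S = (\<Sum>b<n. v (b*n+b))"
  have "qform (n*n) (\<lambda>i j. Delta n $$ (i,j)) v =
      (\<Sum>a<n. \<Sum>t<n. cnj (v (a*n+t)) * (\<Sum>b<n. \<Sum>u<n. (if a = t \<and> b = u then 1 else 0) * v (b*n+u)))"
    by (simp add: qform_def sum_lessThan_mult Delta_entry block_index_simps)
  also have "\<dots> = (\<Sum>a<n. \<Sum>t<n. cnj (v (a*n+t)) * (if a = t then S else 0))"
    by (intro sum.cong refl) (auto simp: S_def if_zero_simps sum.delta)
  also have "\<dots> = (\<Sum>a<n. cnj (v (a*n+a)) * S)"
    by (intro sum.cong refl) (simp add: if_zero_simps sum.delta')
  also have "\<dots> = cnj S * S" by (simp add: S_def cnj_sum sum_distrib_right)
  finally show ?thesis by (simp add: S_def)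
qed

lemma psd_Delta: "psd (n*n) (Delta n)"
  unfolding psd_iff_psd_form psd_form_def qform_Delta using Delta_carrier nonneg_cnj_mult_self by blast

text \<open>The map \<open>A \<mapsto> \<Sum>\<^sub>i\<^sub>j A\<^sub>i\<^sub>j C\<^sub>i\<^sub>j\<close> whose Choi matrix (with blocks \<open>C\<^sub>i\<^sub>j\<close>) is \<open>C\<close>.\<close>
definition map_of_choi :: "nat \<Rightarrow> complex mat \<Rightarrow> complex mat \<Rightarrow> complex mat" where
  "map_of_choi n C A = mat n n (\<lambda>(k,l). \<Sum>i<n. \<Sum>j<n. A $$ (i,j) * C $$ (i*n+k, j*n+l))"

definition choi :: "nat \<Rightarrow> (complex mat \<Rightarrow> complex mat) \<Rightarrow> complex mat" where
  "choi n \<phi> = ampl n n \<phi> (Delta n)"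

lemma map_of_choi_carrier [simp]: "map_of_choi n C A \<in> carrier_mat n n"
  and map_of_choi_dims [simp]: "dim_row (map_of_choi n C A) = n" "dim_col (map_of_choi n C A) = n"
  by (simp_all add: map_of_choi_def)

lemma lin_map_map_of_choi: "lin_map n (map_of_choi n C)"
  unfolding lin_map_def
  by (intro conjI ballI allI map_of_choi_carrier; rule eq_matI)
     (auto simp: map_of_choi_def distrib_right sum.distrib sum_distrib_left mult.assoc)

lemma sum_permute_7:
  "(\<Sum>a\<in>A. \<Sum>t\<in>B. \<Sum>b\<in>A. \<Sum>u\<in>B. \<Sum>i\<in>B. \<Sum>j\<in>B. \<Sum>s\<in>C. f a t b u i j s) =
   (\<Sum>s\<in>C. \<Sum>a\<in>A. \<Sum>i\<in>B. \<Sum>b\<in>A. \<Sum>j\<in>B. \<Sum>u\<in>B. \<Sum>t\<in>B. (f a t b u i j s :: 'c::comm_monoid_add))"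
proof -
  have "(\<Sum>a\<in>A. \<Sum>t\<in>B. \<Sum>b\<in>A. \<Sum>u\<in>B. \<Sum>i\<in>B. \<Sum>j\<in>B. \<Sum>s\<in>C. f a t b u i j s) =
     (\<Sum>s\<in>C. \<Sum>a\<in>A. \<Sum>t\<in>B. \<Sum>b\<in>A. \<Sum>u\<in>B. \<Sum>i\<in>B. \<Sum>j\<in>B. f a t b u i j s)"
    by (simp add: sum.swap[of _ B C] sum.swap[of _ A C])
  also have "\<dots> = (\<Sum>s\<in>C. \<Sum>a\<in>A. \<Sum>i\<in>B. \<Sum>b\<in>A. \<Sum>j\<in>B. \<Sum>u\<in>B. \<Sum>t\<in>B. f a t b u i j s)"
  proof (rule sum.cong[OF refl], rule sum.cong[OF refl])
    fix s a
    have "(\<Sum>t\<in>B. \<Sum>b\<in>A. \<Sum>u\<in>B. \<Sum>i\<in>B. \<Sum>j\<in>B. f a t b u i j s) =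
        (\<Sum>(t,b,u,i,j)\<in>B\<times>A\<times>B\<times>B\<times>B. f a t b u i j s)"
      by (simp add: sum.cartesian_product case_prod_beta)
    also have "\<dots> = (\<Sum>(i,b,j,u,t)\<in>B\<times>A\<times>B\<times>B\<times>B. f a t b u i j s)"
      by (rule sum.reindex_bij_witness[where i="\<lambda>(i,b,j,u,t). (t,b,u,i,j)"
            and j="\<lambda>(t,b,u,i,j). (i,b,j,u,t)"]) auto
    also have "\<dots> = (\<Sum>i\<in>B. \<Sum>b\<in>A. \<Sum>j\<in>B. \<Sum>u\<in>B. \<Sum>t\<in>B. f a t b u i j s)"
      by (simp add: sum.cartesian_product case_prod_beta)
    finally show "(\<Sum>t\<in>B. \<Sum>b\<in>A. \<Sum>u\<in>B. \<Sum>i\<in>B. \<Sum>j\<in>B. f a t b u i j s) =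
        (\<Sum>i\<in>B. \<Sum>b\<in>A. \<Sum>j\<in>B. \<Sum>u\<in>B. \<Sum>t\<in>B. f a t b u i j s)" .
  qed
  finally show ?thesis .
qed

text \<open>For a Gram-type Choi matrix \<open>C = \<Sum>\<^sub>s u\<^sub>s u\<^sub>s\<^sup>*\<close> the amplified map is \<open>P \<mapsto> \<Sum>\<^sub>s W\<^sub>s\<^sup>* P W\<^sub>s\<close>, so its
  form at \<open>v\<close> is a sum of forms of \<open>P\<close>.\<close>
lemma qform_ampl_map_of_choi:
  fixes P :: "nat \<Rightarrow> nat \<Rightarrow> complex"
  assumes "n > 0"
  shows "qform (k*n) (\<lambda>r c. \<Sum>i<n. \<Sum>j<n. P (r div n*n+i) (c div n*n+j) *
            (\<Sum>s<N. U s (i*n + r mod n) * cnj (U s (j*n + c mod n)))) v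
       = (\<Sum>s<N. qform (k*n) P (\<lambda>x. \<Sum>l<n. cnj (U s ((x mod n)*n + l)) * v ((x div n)*n + l)))"
  using assms
  by (simp add: qform_def sum_lessThan_mult block_index_simps sum_distrib_left sum_distrib_right)
     (subst sum_permute_7, simp add: mult_ac)

lemma ampl_map_of_choi_entry:
  assumes "r < k*n" "c < k*n"
  shows "ampl n k (map_of_choi n C) P $$ (r,c) =
    (\<Sum>i<n. \<Sum>j<n. P $$ (r div n*n+i, c div n*n+j) * C $$ (i*n + r mod n, j*n + c mod n))"
proof -
  have "n > 0" using assms by (cases n) auto
  then show ?thesis using assms by (simp add: ampl_def map_of_choi_def block_def)
qed

lemma comp_pos_map_of_choi:
  assumes C: "psd (n*n) C"
  shows "comp_pos n (map_of_choi n C)"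
  unfolding comp_pos_def
proof (intro conjI allI impI lin_map_map_of_choi)
  fix k P assume P: "psd (k*n) P"
  show "psd (k*n) (ampl n k (map_of_choi n C) P)"
  proof (cases "n = 0")
    case True
    then show ?thesis by (simp add: psd_iff_psd_form ampl_def psd_form_def qform_def nonneg_def)
  next
    case False
    obtain U where U: "\<And>i j. i < n*n \<Longrightarrow> j < n*n \<Longrightarrow> C $$ (i,j) = (\<Sum>r<n*n. U r i * cnj (U r j))"
      using C psd_form_gram by (auto simp: psd_iff_psd_form)
    have "qform (k*n) (\<lambda>i j. ampl n k (map_of_choi n C) P $$ (i,j)) v =
        (\<Sum>s<n*n. qform (k*n) (\<lambda>i j. P $$ (i,j))
           (\<lambda>x. \<Sum>l<n. cnj (U s ((x mod n)*n + l)) * v ((x div n)*n + l)))" for v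
      using False
      by (subst qform_ampl_map_of_choi[symmetric], simp, intro qform_cong)
         (simp add: ampl_map_of_choi_entry U block_index_less)
    then show ?thesis
      using P by (auto simp: psd_iff_psd_form psd_form_def ampl_def intro: nonneg_sum)
  qed
qed

lemma choi_carrier: "choi n \<phi> \<in> carrier_mat (n*n) (n*n)"
  by (simp add: choi_def ampl_def)

lemma choi_entry:
  assumes "i < n" "j < n" "k < n" "l < n"
  shows "choi n \<phi> $$ (i*n+k, j*n+l) = \<phi> (Eunit n i j) $$ (k,l)"
  using assms by (simp add: choi_def ampl_def block_index_simps block_Delta)

lemma block_choi:
  assumes "lin_map n \<phi>" "a < n" "b < n"
  shows "block n (choi n \<phi>) a b = \<phi> (Eunit n a b)"
  using lin_map_carrier[OF assms(1) Eunit_carrier, of a b]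
  by (intro eq_matI) (auto simp: block_def choi_entry assms(2,3))

lemma psd_choi: "comp_pos n \<phi> \<Longrightarrow> psd (n*n) (choi n \<phi>)"
  unfolding comp_pos_def choi_def using psd_Delta by blast

lemma map_of_choi_eq_block_sum:
  "map_of_choi n C A = msum n n (\<lambda>i. msum n n (\<lambda>j. A $$ (i,j) \<cdot>\<^sub>m block n C i j))"
proof -
  have M: "msum n n (\<lambda>i. msum n n (\<lambda>j. A $$ (i,j) \<cdot>\<^sub>m block n C i j)) \<in> carrier_mat n n"
    by (intro msum_carrier) auto
  show ?thesis
  proof (rule eq_matI)
    fix k l assume "k < dim_row (msum n n (\<lambda>i. msum n n (\<lambda>j. A $$ (i,j) \<cdot>\<^sub>m block n C i j)))"
      "l < dim_col (msum n n (\<lambda>i. msum n n (\<lambda>j. A $$ (i,j) \<cdot>\<^sub>m block n C i j)))"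
    then have "k < n" "l < n" using M by auto
    then show "map_of_choi n C A $$ (k,l) =
        msum n n (\<lambda>i. msum n n (\<lambda>j. A $$ (i,j) \<cdot>\<^sub>m block n C i j)) $$ (k,l)"
      by (simp add: map_of_choi_def msum_index msum_carrier block_def)
  qed (use M in \<open>simp_all add: map_of_choi_def\<close>)
qed

lemma map_of_choi_choi:
  assumes lin: "lin_map n \<phi>" and A: "A \<in> carrier_mat n n"
  shows "\<phi> A = map_of_choi n (choi n \<phi>) A"
proof -
  have "\<phi> A = msum n n (\<lambda>i. \<phi> (msum n n (\<lambda>j. A $$ (i,j) \<cdot>\<^sub>m Eunit n i j)))"
    by (subst mat_eq_msum_Eunit[OF A], rule lin_map_msum[OF lin]) (auto intro!: msum_carrier)
  also have "\<dots> = msum n n (\<lambda>i. msum n n (\<lambda>j. A $$ (i,j) \<cdot>\<^sub>m \<phi> (Eunit n i j)))"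
    using lin by (intro arg_cong[where f="msum n n"] ext, subst lin_map_msum) (auto simp: lin_map_def)
  also have "\<dots> = map_of_choi n (choi n \<phi>) A"
    unfolding map_of_choi_eq_block_sum using lin by (intro msum_cong) (simp add: block_choi)
  finally show ?thesis .
qed

lemma map_of_choi_one: "map_of_choi n C (1\<^sub>m n) = ptrace1 n C"
  by (rule eq_matI) (simp_all add: map_of_choi_def ptrace1_def if_zero_simps sum.delta')

lemma map_of_choi_add:
  assumes "C1 \<in> carrier_mat (n*n) (n*n)" "C2 \<in> carrier_mat (n*n) (n*n)"
  shows "map_of_choi n (C1 + C2) A = map_of_choi n C1 A + map_of_choi n C2 A"
  by (rule eq_matI) (use assms block_index_less in \<open>auto simp: map_of_choi_def distrib_left sum.distrib\<close>)

lemma map_of_choi_smult: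
  assumes "C \<in> carrier_mat (n*n) (n*n)"
  shows "map_of_choi n (a \<cdot>\<^sub>m C) A = a \<cdot>\<^sub>m map_of_choi n C A"
  by (rule eq_matI) (use assms block_index_less in \<open>auto simp: map_of_choi_def sum_distrib_left mult_ac\<close>)

lemma map_of_choi_Delta: assumes "A \<in> carrier_mat n n" shows "map_of_choi n (Delta n) A = A"
proof (rule eq_matI)
  fix k l assume "k < dim_row A" "l < dim_col A"
  then have kl: "k < n" "l < n" using assms by auto
  have "(\<Sum>i<n. \<Sum>j<n. A $$ (i,j) * Delta n $$ (i*n+k, j*n+l)) =
      (\<Sum>i<n. \<Sum>j<n. if k = i \<and> l = j then A $$ (i,j) else 0)"
    using kl by (intro sum.cong refl) (auto simp: Delta_entry block_index_simps)
  also have "\<dots> = A $$ (k,l)" using kl by (rule sum_delta_2)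
  finally show "map_of_choi n (Delta n) A $$ (k,l) = A $$ (k,l)" using kl by (simp add: map_of_choi_def)
qed (use assms in \<open>auto simp: map_of_choi_def\<close>)

lemma choi_minus_id:
  assumes "lin_map n \<phi>"
  shows "choi n (\<lambda>A. \<phi> A - A) = choi n \<phi> - Delta n"
proof (rule eq_matI)
  fix r c assume "r < dim_row (choi n \<phi> - Delta n)" "c < dim_col (choi n \<phi> - Delta n)"
  then have rc: "r < n*n" "c < n*n" by auto
  then have "n > 0" by (cases n) auto
  have "\<phi> (block n (Delta n) (r div n) (c div n)) \<in> carrier_mat n n"
    using lin_map_carrier[OF assms] by simp
  then show "choi n (\<lambda>A. \<phi> A - A) $$ (r,c) = (choi n \<phi> - Delta n) $$ (r,c)"
    using rc \<open>n > 0\<close> by (simp add: choi_def ampl_def block_def)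
qed (simp_all add: choi_def ampl_def)

section \<open>Matricial systems and \<open>M\<^sub>n \<otimes> \<S>\<close>\<close>

lemma matricial_system_carrier: "matricial_system n S \<Longrightarrow> A \<in> S \<Longrightarrow> A \<in> carrier_mat n n"
  by (auto simp: matricial_system_def)

lemma matricial_system_smult: "matricial_system n S \<Longrightarrow> A \<in> S \<Longrightarrow> c \<cdot>\<^sub>m A \<in> S"
  by (simp add: matricial_system_def)

lemma matricial_system_msum:
  assumes ms: "matricial_system n S" and f: "\<And>i. i < m \<Longrightarrow> f i \<in> S"
  shows "msum n m f \<in> S"
  using f
proof (induction m)
  case 0
  have "(0::complex) \<cdot>\<^sub>m 1\<^sub>m n = 0\<^sub>m n n" by (intro eq_matI) auto
  then show ?case using ms by (metis matricial_system_def msum.simps(1))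
qed (use ms in \<open>simp add: matricial_system_def\<close>)

lemma block_smult:
  assumes "X \<in> carrier_mat (k*n) (k*n)" "a < k" "b < k"
  shows "block n (c \<cdot>\<^sub>m X) a b = c \<cdot>\<^sub>m block n X a b"
  by (rule eq_matI) (use assms in \<open>simp_all add: block_def block_index_less\<close>)

lemma block_kron_msum:
  assumes "\<And>i. i < m \<Longrightarrow> B i \<in> carrier_mat n n" "a < n" "b < n"
  shows "block n (msum (n*n) m (\<lambda>i. kron n (A i) (B i))) a b = msum n m (\<lambda>i. A i $$ (a,b) \<cdot>\<^sub>m B i)"
proof (rule eq_matI)
  fix i j assume "i < dim_row (msum n m (\<lambda>i. A i $$ (a,b) \<cdot>\<^sub>m B i))"
    "j < dim_col (msum n m (\<lambda>i. A i $$ (a,b) \<cdot>\<^sub>m B i))"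
  then have ij: "i < n" "j < n" using assms by (simp_all add: msum_dims)
  have "(\<Sum>s<m. A s $$ (a,b) * B s $$ (i,j)) = (\<Sum>s<m. (A s $$ (a,b) \<cdot>\<^sub>m B s) $$ (i,j))"
  proof (intro sum.cong refl)
    fix s assume "s \<in> {..<m}"
    then have "B s \<in> carrier_mat n n" using assms(1) by simp
    then show "A s $$ (a,b) * B s $$ (i,j) = (A s $$ (a,b) \<cdot>\<^sub>m B s) $$ (i,j)" using ij by simp
  qed
  then show "block n (msum (n*n) m (\<lambda>i. kron n (A i) (B i))) a b $$ (i,j) =
      msum n m (\<lambda>i. A i $$ (a,b) \<cdot>\<^sub>m B i) $$ (i,j)"
    using assms ij by (simp add: block_def msum_index kron_def block_index_simps)
qed (use assms in \<open>simp_all add: msum_dims\<close>)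

lemma msum_kron_Eunit_blocks:
  assumes "X \<in> carrier_mat (n*n) (n*n)"
  shows "X = msum (n*n) (n*n) (\<lambda>s. kron n (Eunit n (s div n) (s mod n)) (block n X (s div n) (s mod n)))"
proof (rule eq_matI)
  fix r c assume "r < dim_row (msum (n*n) (n*n) (\<lambda>s. kron n (Eunit n (s div n) (s mod n)) (block n X (s div n) (s mod n))))"
    "c < dim_col (msum (n*n) (n*n) (\<lambda>s. kron n (Eunit n (s div n) (s mod n)) (block n X (s div n) (s mod n))))"
  then have rc: "r < n*n" "c < n*n" by (simp_all add: msum_dims)
  have "msum (n*n) (n*n) (\<lambda>s. kron n (Eunit n (s div n) (s mod n)) (block n X (s div n) (s mod n))) $$ (r,c)
      = (\<Sum>a<n. \<Sum>t<n. if r div n = a \<and> c div n = t then X $$ (a*n + r mod n, t*n + c mod n) else 0)"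
    using rc div_less_square mod_less_square
    by (simp add: msum_index sum_lessThan_mult kron_def Eunit_def block_def if_zero_simps)
       (intro sum.cong refl, simp add: block_index_simps)
  also have "\<dots> = X $$ (r,c)"
    using div_less_square[OF rc(1)] div_less_square[OF rc(2)] by (subst sum_delta_2) auto
  finally show "X $$ (r,c) = msum (n*n) (n*n) (\<lambda>s. kron n (Eunit n (s div n) (s mod n))
      (block n X (s div n) (s mod n))) $$ (r,c)" by simp
qed (use assms in \<open>simp_all add: msum_dims\<close>)

lemma tensor_span_iff_blocks:
  assumes ms: "matricial_system n S" and X: "X \<in> carrier_mat (n*n) (n*n)"
  shows "X \<in> tensor_span n S \<longleftrightarrow> (\<forall>a<n. \<forall>b<n. block n X a b \<in> S)"
proof (intro iffI allI impI)
  fix a b assume "X \<in> tensor_span n S" "a < n" "b < n"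
  then obtain m A B where "\<forall>i<m. A i \<in> carrier_mat n n \<and> B i \<in> S"
    and "X = msum (n*n) m (\<lambda>i. kron n (A i) (B i))" unfolding tensor_span_def by blast
  then show "block n X a b \<in> S"
    using \<open>a < n\<close> \<open>b < n\<close> matricial_system_carrier[OF ms]
    by (simp add: block_kron_msum matricial_system_msum[OF ms] matricial_system_smult[OF ms])
next
  assume "\<forall>a<n. \<forall>b<n. block n X a b \<in> S"
  then show "X \<in> tensor_span n S"
    unfolding tensor_span_def using msum_kron_Eunit_blocks[OF X] div_less_square mod_less_square
    by (intro CollectI exI[of _ "n*n"] exI[of _ "\<lambda>s. Eunit n (s div n) (s mod n)"]
        exI[of _ "\<lambda>s. block n X (s div n) (s mod n)"]) auto
qed

lemma map_of_choi_in_system: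
  assumes ms: "matricial_system n S" and "\<And>i j. i < n \<Longrightarrow> j < n \<Longrightarrow> block n C i j \<in> S"
  shows "map_of_choi n C A \<in> S"
  unfolding map_of_choi_eq_block_sum
  using assms by (intro matricial_system_msum[OF ms] matricial_system_smult[OF ms])

lemma vnorm_scale: "vnorm (vec n (\<lambda>i. d * v $ i)) = cmod d * vnorm (vec n (\<lambda>i. v $ i))"
proof -
  have "(\<Sum>i<n. (cmod (d * v $ i))\<^sup>2) = (cmod d)^2 * (\<Sum>i<n. (cmod (v $ i))\<^sup>2)"
    by (simp add: norm_mult power_mult_distrib sum_distrib_left)
  then show ?thesis by (simp add: vnorm_def real_sqrt_mult)
qed

lemma opnorm_scalar: assumes "n \<ge> 1" shows "opnorm n (d \<cdot>\<^sub>m 1\<^sub>m n) = cmod d"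
proof -
  have "(d \<cdot>\<^sub>m 1\<^sub>m n) *\<^sub>v v = vec n (\<lambda>i. d * v $ i)" if "v \<in> carrier_vec n" for v
    using that by (intro eq_vecI) (simp_all add: mult_mat_vec_entry if_zero_simps sum.delta)
  moreover have "vec n (\<lambda>i. v $ i) = v" if "v \<in> carrier_vec n" for v :: "complex vec"
    using that by (intro eq_vecI) auto
  ultimately have T: "{vnorm ((d \<cdot>\<^sub>m 1\<^sub>m n) *\<^sub>v v) | v. v \<in> carrier_vec n \<and> vnorm v \<le> 1}
      = {cmod d * vnorm v | v. v \<in> carrier_vec n \<and> vnorm v \<le> 1}"
    by (metis vnorm_scale)
  have "vnorm (unit_vec n 0) = 1"
    using assms by (simp add: vnorm_def unit_vec_def if_distrib[of "\<lambda>x. (cmod x)\<^sup>2"] cong: if_cong)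
  then have "cmod d \<in> {cmod d * vnorm v | v. v \<in> carrier_vec n \<and> vnorm v \<le> 1}"
    by (intro CollectI exI[of _ "unit_vec n 0"]) simp
  then show ?thesis
    unfolding opnorm_def T
    by (intro cSup_eq_maximum) (auto intro: mult_left_le[OF _ norm_ge_zero])
qed

section \<open>Admissible maps and feasible points\<close>

definition cp_admissible :: "nat \<Rightarrow> complex mat set \<Rightarrow> (complex mat \<Rightarrow> complex mat) \<Rightarrow> bool" where
  "cp_admissible n S \<phi> \<longleftrightarrow>
     \<phi> \<in> CP1 n \<and> (\<forall>A \<in> carrier_mat n n. \<phi> A \<in> S) \<and> comp_pos n (\<lambda>A. \<phi> A - A)"

definition sdp_feasible :: "nat \<Rightarrow> complex mat set \<Rightarrow> real \<Rightarrow> complex mat \<Rightarrow> bool" where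
  "sdp_feasible n S lam X \<longleftrightarrow> X \<in> carrier_mat (n*n) (n*n) \<and>
     ptrace1 n X = complex_of_real (1 - lam) \<cdot>\<^sub>m 1\<^sub>m n \<and>
     X + complex_of_real lam \<cdot>\<^sub>m Delta n \<in> tensor_span n S \<and> psd (n*n) X"

lemma Ind_CP_eq: "Ind_CP n S = Inf {opnorm n (\<phi> (1\<^sub>m n)) | \<phi>. cp_admissible n S \<phi>}"
  by (simp add: Ind_CP_def cp_admissible_def)

lemma sdp_value_eq: "sdp_value n S = Sup {lam. \<exists>X. sdp_feasible n S lam X}"
  by (simp add: sdp_value_def sdp_feasible_def)

lemma ptrace1_diag_nonneg:
  assumes "psd (n*n) X" "k < n"
  shows "nonneg (ptrace1 n X $$ (k,k))"
proof -
  have "nonneg (X $$ (i*n+k, i*n+k))" if "i < n" for i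
    using assms that by (intro psd_form_diag_nonneg[of "n*n"]) (auto simp: psd_iff_psd_form block_index_less)
  then show ?thesis using assms(2) by (simp add: ptrace1_def) (rule nonneg_sum, simp)
qed

lemma cp_admissible_unit:
  assumes n: "n \<ge> 1" and adm: "cp_admissible n S \<phi>"
  obtains c where "c \<ge> 1" "\<phi> (1\<^sub>m n) = complex_of_real c \<cdot>\<^sub>m 1\<^sub>m n"
proof -
  have cp: "comp_pos n (\<lambda>A. \<phi> A - A)" using adm by (simp add: cp_admissible_def)
  then have lin: "lin_map n (\<lambda>A. \<phi> A - A)" by (simp add: comp_pos_def)
  have "\<exists>d. \<phi> (1 \<cdot>\<^sub>m 1\<^sub>m n) = d \<cdot>\<^sub>m 1\<^sub>m n" using adm by (simp add: cp_admissible_def CP1_def)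
  then obtain d where d: "\<phi> (1\<^sub>m n) = d \<cdot>\<^sub>m 1\<^sub>m n" by (auto simp: one_smult_mat)
  have "ptrace1 n (choi n (\<lambda>A. \<phi> A - A)) = map_of_choi n (choi n (\<lambda>A. \<phi> A - A)) (1\<^sub>m n)"
    by (simp add: map_of_choi_one)
  also have "\<dots> = \<phi> (1\<^sub>m n) - 1\<^sub>m n" using map_of_choi_choi[OF lin one_carrier_mat] by simp
  also have "\<dots> = (d - 1) \<cdot>\<^sub>m 1\<^sub>m n" unfolding d by (intro eq_matI) (auto simp: algebra_simps)
  finally have "ptrace1 n (choi n (\<lambda>A. \<phi> A - A)) $$ (0,0) = d - 1" using n by simp
  then have "nonneg (d - 1)" using ptrace1_diag_nonneg[OF psd_choi[OF cp], of 0] n by simp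
  then obtain r where "r \<ge> 0" "d - 1 = complex_of_real r" by (auto simp: nonneg_iff_of_real)
  then show ?thesis using d by (intro that[of "1 + r"]) (auto simp: algebra_simps)
qed

lemma cp_admissible_imp_feasible:
  assumes ms: "matricial_system n S" and adm: "cp_admissible n S \<phi>"
    and c: "c \<ge> 1" "\<phi> (1\<^sub>m n) = complex_of_real c \<cdot>\<^sub>m 1\<^sub>m n"
  shows "sdp_feasible n S (inverse c) (complex_of_real (inverse c) \<cdot>\<^sub>m choi n (\<lambda>A. \<phi> A - A))"
proof -
  have cp: "comp_pos n (\<lambda>A. \<phi> A - A)" and lin: "lin_map n \<phi>"
    and rng: "\<forall>A \<in> carrier_mat n n. \<phi> A \<in> S"
    using adm by (auto simp: cp_admissible_def CP1_def comp_pos_def)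
  have lin': "lin_map n (\<lambda>A. \<phi> A - A)" using cp by (simp add: comp_pos_def)
  define X where "X = complex_of_real (inverse c) \<cdot>\<^sub>m choi n (\<lambda>A. \<phi> A - A)"
  have X: "X \<in> carrier_mat (n*n) (n*n)" by (simp add: X_def choi_carrier)
  have "ptrace1 n X = map_of_choi n X (1\<^sub>m n)" by (simp add: map_of_choi_one)
  also have "\<dots> = complex_of_real (inverse c) \<cdot>\<^sub>m (\<phi> (1\<^sub>m n) - 1\<^sub>m n)"
    unfolding X_def map_of_choi_smult[OF choi_carrier] map_of_choi_choi[OF lin' one_carrier_mat, symmetric] ..
  also have "\<dots> = complex_of_real (1 - inverse c) \<cdot>\<^sub>m 1\<^sub>m n"
    using c by (intro eq_matI) (auto simp: field_simps)
  finally have ptr: "ptrace1 n X = complex_of_real (1 - inverse c) \<cdot>\<^sub>m 1\<^sub>m n" .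
  have "X + complex_of_real (inverse c) \<cdot>\<^sub>m Delta n = complex_of_real (inverse c) \<cdot>\<^sub>m choi n \<phi>"
    unfolding X_def choi_minus_id[OF lin]
    using choi_carrier[of n \<phi>] Delta_carrier[of n] by (intro eq_matI) (auto simp: algebra_simps)
  moreover have "block n (complex_of_real (inverse c) \<cdot>\<^sub>m choi n \<phi>) a b \<in> S" if "a < n" "b < n" for a b
    using that rng ms
    by (simp add: block_smult[OF choi_carrier] block_choi[OF lin] matricial_system_smult)
  ultimately have "X + complex_of_real (inverse c) \<cdot>\<^sub>m Delta n \<in> tensor_span n S"
    using tensor_span_iff_blocks[OF ms] choi_carrier[of n \<phi>] by simp
  moreover have "psd (n*n) X" unfolding X_def using c by (intro psd_smult psd_choi cp) simp
  ultimately show ?thesis using X ptr by (simp add: sdp_feasible_def X_def)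
qed

lemma map_of_choi_feasible_in_system:
  assumes ms: "matricial_system n S" and lam: "lam > 0" and feas: "sdp_feasible n S lam X"
  shows "map_of_choi n (complex_of_real (inverse lam) \<cdot>\<^sub>m X + Delta n) A \<in> S"
proof -
  have X: "X \<in> carrier_mat (n*n) (n*n)" and tsp: "X + complex_of_real lam \<cdot>\<^sub>m Delta n \<in> tensor_span n S"
    using feas by (auto simp: sdp_feasible_def)
  have XD: "X + complex_of_real lam \<cdot>\<^sub>m Delta n \<in> carrier_mat (n*n) (n*n)"
    using X Delta_carrier[of n] by simp
  have eq: "complex_of_real (inverse lam) \<cdot>\<^sub>m X + Delta n =
      complex_of_real (inverse lam) \<cdot>\<^sub>m (X + complex_of_real lam \<cdot>\<^sub>m Delta n)"
    using X lam by (intro eq_matI) (auto simp: field_simps)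
  have "block n (X + complex_of_real lam \<cdot>\<^sub>m Delta n) i j \<in> S" if "i < n" "j < n" for i j
    using tsp that tensor_span_iff_blocks[OF ms XD] by blast
  then show ?thesis unfolding eq
    by (intro map_of_choi_in_system[OF ms]) (simp add: block_smult[OF XD] matricial_system_smult[OF ms])
qed

text \<open>The map is \<open>id\<close> plus the completely positive map with Choi matrix \<open>\<lambda>\<^sup>-\<^sup>1X\<close>.\<close>
lemma feasible_imp_cp_admissible:
  assumes ms: "matricial_system n S" and lam: "lam > 0" and feas: "sdp_feasible n S lam X"
  defines "\<phi> \<equiv> map_of_choi n (complex_of_real (inverse lam) \<cdot>\<^sub>m X + Delta n)"
  shows "cp_admissible n S \<phi>" and "\<phi> (1\<^sub>m n) = complex_of_real (inverse lam) \<cdot>\<^sub>m 1\<^sub>m n"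
proof -
  define Y where "Y = complex_of_real (inverse lam) \<cdot>\<^sub>m X"
  have X: "X \<in> carrier_mat (n*n) (n*n)" and ptr: "ptrace1 n X = complex_of_real (1 - lam) \<cdot>\<^sub>m 1\<^sub>m n"
    and psdX: "psd (n*n) X"
    using feas by (auto simp: sdp_feasible_def)
  have Y: "Y \<in> carrier_mat (n*n) (n*n)" using X by (simp add: Y_def)
  have psdY: "psd (n*n) Y" unfolding Y_def using psdX lam by (intro psd_smult) simp_all
  have \<phi>_id: "\<phi> A = map_of_choi n Y A + A" if "A \<in> carrier_mat n n" for A
    unfolding \<phi>_def Y_def[symmetric] using that
    by (simp add: map_of_choi_add[OF Y Delta_carrier] map_of_choi_Delta)
  have cp: "comp_pos n \<phi>"
    unfolding \<phi>_def using psdY psd_Delta by (intro comp_pos_map_of_choi psd_add) (simp_all add: Y_def)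
  have "\<phi> (1\<^sub>m n) = complex_of_real (inverse lam) \<cdot>\<^sub>m ptrace1 n X + 1\<^sub>m n"
    by (simp only: \<phi>_id[OF one_carrier_mat] Y_def map_of_choi_smult[OF X]) (simp only: map_of_choi_one)
  also have "\<dots> = complex_of_real (inverse lam) \<cdot>\<^sub>m 1\<^sub>m n"
    unfolding ptr using lam by (intro eq_matI) (auto simp: field_simps)
  finally show unit: "\<phi> (1\<^sub>m n) = complex_of_real (inverse lam) \<cdot>\<^sub>m 1\<^sub>m n" .
  have "\<phi> \<in> CP1 n"
  proof -
    have "\<phi> (c \<cdot>\<^sub>m 1\<^sub>m n) = (c * complex_of_real (inverse lam)) \<cdot>\<^sub>m 1\<^sub>m n" for c
      using cp unit by (simp add: comp_pos_def lin_map_def) (intro eq_matI, auto)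
    then show ?thesis using cp by (auto simp: CP1_def)
  qed
  moreover have "\<phi> A \<in> S" for A
    unfolding \<phi>_def using feas by (rule map_of_choi_feasible_in_system[OF ms lam])
  moreover have "comp_pos n (\<lambda>A. \<phi> A - A)"
  proof (rule comp_pos_cong[OF _ comp_pos_map_of_choi[OF psdY]])
    fix A :: "complex mat" assume A: "A \<in> carrier_mat n n"
    show "map_of_choi n Y A = \<phi> A - A" unfolding \<phi>_id[OF A] using A by (intro eq_matI) auto
  qed
  ultimately show "cp_admissible n S \<phi>" by (simp add: cp_admissible_def)
qed

lemma cmod_sum_squared_le: "(cmod (\<Sum>a<n. x a))\<^sup>2 \<le> real n * (\<Sum>a<n. (cmod (x a))\<^sup>2)"
proof -
  define S where "S = (\<Sum>a<n. x a)"
  define Q where "Q = (\<Sum>a<n. cnj (x a) * x a)"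
  define P where "P = (\<Sum>a<n. \<Sum>b<n. cnj (x a) * x b)"
  have P1: "cnj S * S = P" by (simp add: S_def P_def cnj_sum sum_product)
  have P2: "(\<Sum>a<n. \<Sum>b<n. cnj (x b) * x a) = P" unfolding P_def by (rule sum.swap)
  have "(\<Sum>a<n. \<Sum>b<n. cnj (x a - x b) * (x a - x b)) =
      (\<Sum>a<n. \<Sum>b<n. cnj (x a) * x a) + (\<Sum>a<n. \<Sum>b<n. cnj (x b) * x b)
      - (\<Sum>a<n. \<Sum>b<n. cnj (x a) * x b) - (\<Sum>a<n. \<Sum>b<n. cnj (x b) * x a)"
    by (simp add: algebra_simps sum_subtractf sum.distrib)
  also have "\<dots> = 2 * of_nat n * Q - 2 * (cnj S * S)"
    unfolding P1 P2 P_def[symmetric] by (simp add: Q_def sum_distrib_left mult.assoc)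
  moreover have "nonneg (\<Sum>a<n. \<Sum>b<n. cnj (x a - x b) * (x a - x b))"
    by (intro nonneg_sum nonneg_cnj_mult_self)
  ultimately have "nonneg (2 * of_nat n * Q - 2 * (cnj S * S))" by (simp only:)
  then show ?thesis unfolding S_def Q_def cnj_mult_self by (simp add: nonneg_def)
qed

text \<open>\<open>n\<^sup>-\<^sup>1 I - n\<^sup>-\<^sup>2 \<Delta>\<^sub>n\<close> is positive because \<open>n\<^sup>-\<^sup>1\<Delta>\<^sub>n\<close> is a projection.\<close>
lemma psd_identity_minus_Delta:
  assumes "n \<ge> 1"
  shows "psd (n*n) (complex_of_real (inverse n) \<cdot>\<^sub>m 1\<^sub>m (n*n) +
      complex_of_real (- inverse (real n ^ 2)) \<cdot>\<^sub>m Delta n)"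
    (is "psd _ ?X")
proof -
  have "nonneg (qform (n*n) (\<lambda>i j. ?X $$ (i,j)) v)" for v
  proof -
    define s where "s = (cmod (\<Sum>b<n. v (b*n+b)))\<^sup>2"
    define q where "q = (\<Sum>r<n*n. (cmod (v r))\<^sup>2)"
    have "qform (n*n) (\<lambda>i j. ?X $$ (i,j)) v = qform (n*n) (\<lambda>i j. complex_of_real (inverse n) *
        (if i = j then 1 else 0) + complex_of_real (- inverse (real n ^ 2)) * Delta n $$ (i,j)) v"
      by (rule qform_cong) simp
    also have "\<dots> = complex_of_real (inverse n * q - inverse (real n ^ 2) * s)"
      unfolding qform_lin qform_Delta cnj_mult_self
      by (simp add: qform_def q_def s_def if_zero_simps cnj_mult_self)
    finally have qe: "qform (n*n) (\<lambda>i j. ?X $$ (i,j)) v =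
        complex_of_real (inverse n * q - inverse (real n ^ 2) * s)" .
    have "s \<le> n * (\<Sum>a<n. (cmod (v (a*n+a)))\<^sup>2)"
      unfolding s_def by (rule cmod_sum_squared_le)
    also have "\<dots> \<le> n * (\<Sum>a<n. \<Sum>t<n. (cmod (v (a*n+t)))\<^sup>2)"
      by (intro mult_left_mono sum_mono member_le_sum) auto
    also have "\<dots> = n * q" unfolding q_def sum_lessThan_mult ..
    finally have "s \<le> n * q" .
    then have "inverse (real n ^ 2) * s \<le> inverse (real n ^ 2) * (n * q)"
      by (rule mult_left_mono) simp
    also have "\<dots> = inverse n * q" using assms by (simp add: power2_eq_square)
    finally show ?thesis unfolding qe nonneg_def Re_complex_of_real Im_complex_of_real
      by (intro conjI) linarith+
  qed
  then show ?thesis by (simp add: psd_iff_psd_form psd_form_def Delta_carrier)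
qed

lemma feasible_inverse_square:
  assumes n: "n \<ge> 1" and ms: "matricial_system n S"
  shows "sdp_feasible n S (inverse (real n ^ 2))
    (complex_of_real (inverse n) \<cdot>\<^sub>m 1\<^sub>m (n*n) + complex_of_real (- inverse (real n ^ 2)) \<cdot>\<^sub>m Delta n)"
    (is "sdp_feasible _ _ ?lam ?X")
proof -
  have X: "?X \<in> carrier_mat (n*n) (n*n)" using Delta_carrier[of n] by simp
  have ptr: "ptrace1 n ?X = complex_of_real (1 - ?lam) \<cdot>\<^sub>m 1\<^sub>m n"
  proof (rule eq_matI)
    fix k l assume "k < dim_row (complex_of_real (1 - ?lam) \<cdot>\<^sub>m 1\<^sub>m n)" "l < dim_col (complex_of_real (1 - ?lam) \<cdot>\<^sub>m 1\<^sub>m n)"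
    then have kl: "k < n" "l < n" by auto
    have "ptrace1 n ?X $$ (k,l) = (\<Sum>i<n. complex_of_real (inverse n) * (if k = l then 1 else 0)
        - complex_of_real ?lam * (if i = k \<and> i = l then 1 else 0))"
      using kl by (simp add: ptrace1_def Delta_entry block_index_simps block_index_eq_iff)
    also have "\<dots> = (complex_of_real (1 - ?lam) \<cdot>\<^sub>m 1\<^sub>m n) $$ (k,l)"
      using kl n by (simp add: sum_subtractf if_distrib[of "\<lambda>x. _ * x"] cong: if_cong)
         (auto simp: sum.delta power2_eq_square intro!: sum.neutral)
    finally show "ptrace1 n ?X $$ (k,l) = (complex_of_real (1 - ?lam) \<cdot>\<^sub>m 1\<^sub>m n) $$ (k,l)" .
  qed (auto simp: ptrace1_def)
  have "block n (?X + complex_of_real ?lam \<cdot>\<^sub>m Delta n) a b =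
      complex_of_real (if a = b then inverse n else 0) \<cdot>\<^sub>m 1\<^sub>m n" if "a < n" "b < n" for a b
    by (rule eq_matI) (use that in \<open>auto simp: block_def Delta_entry block_index_simps block_index_eq_iff\<close>)
  moreover have "?X + complex_of_real ?lam \<cdot>\<^sub>m Delta n \<in> carrier_mat (n*n) (n*n)"
    using X Delta_carrier[of n] by simp
  ultimately have "?X + complex_of_real ?lam \<cdot>\<^sub>m Delta n \<in> tensor_span n S"
    using ms by (simp only: tensor_span_iff_blocks[OF ms]) (simp add: matricial_system_def)
  then show ?thesis using X ptr psd_identity_minus_Delta[OF n] by (simp add: sdp_feasible_def)
qed

lemma inverse_Inf_eq_Sup:
  fixes T L :: "real set"
  assumes T: "\<And>t. t \<in> T \<Longrightarrow> 1 \<le> t \<and> inverse t \<in> L"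
    and L: "\<And>l. l \<in> L \<Longrightarrow> 0 < l \<Longrightarrow> inverse l \<in> T"
    and l0: "l0 \<in> L" "0 < l0"
  shows "inverse (Inf T) = Sup L"
proof -
  have Tne: "T \<noteq> {}" using L[OF l0] by blast
  have Tbd: "bdd_below T" using T by (intro bdd_belowI[of _ 1]) blast
  have t1: "1 \<le> Inf T" using T Tne by (intro cInf_greatest) auto
  show ?thesis
  proof (rule cSup_eq_non_empty[symmetric])
    show "L \<noteq> {}" using l0 by blast
  next
    fix l assume l: "l \<in> L"
    show "l \<le> inverse (Inf T)"
    proof (cases "l > 0")
      case True
      have "Inf T \<le> inverse l" using cInf_lower[OF L[OF l True] Tbd] .
      from le_imp_inverse_le[OF this] show ?thesis using t1 True by simp
    next
      case False
      then show ?thesis using t1 by (smt (verit) inverse_positive_iff_positive)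
    qed
  next
    fix y assume ub: "\<And>l. l \<in> L \<Longrightarrow> l \<le> y"
    have y: "0 < y" using ub[OF l0(1)] l0(2) by simp
    have "inverse y \<le> t" if "t \<in> T" for t
    proof -
      have "0 < inverse t" "inverse t \<le> y" using T[OF that] ub by auto
      from le_imp_inverse_le[OF this(2,1)] show ?thesis by simp
    qed
    then have "inverse y \<le> Inf T" using Tne by (intro cInf_greatest) auto
    from le_imp_inverse_le[OF this] show "inverse (Inf T) \<le> y" using y by simp
  qed
qed

theorem proposition4p1:
  fixes n :: nat and S :: "complex mat set"
  assumes "n \<ge> 1" and "matricial_system n S"
  shows "inverse (Ind_CP n S) = sdp_value n S"
  unfolding Ind_CP_eq sdp_value_eq
proof (rule inverse_Inf_eq_Sup)
  fix t assume "t \<in> {opnorm n (\<phi> (1\<^sub>m n)) | \<phi>. cp_admissible n S \<phi>}"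
  then obtain \<phi> where adm: "cp_admissible n S \<phi>" and t: "t = opnorm n (\<phi> (1\<^sub>m n))" by blast
  obtain c where c: "c \<ge> 1" "\<phi> (1\<^sub>m n) = complex_of_real c \<cdot>\<^sub>m 1\<^sub>m n"
    using cp_admissible_unit[OF assms(1) adm] .
  have "t = c" using t c opnorm_scalar[OF assms(1)] by simp
  then show "1 \<le> t \<and> inverse t \<in> {lam. \<exists>X. sdp_feasible n S lam X}"
    using c cp_admissible_imp_feasible[OF assms(2) adm c] by blast
next
  fix lam assume "lam \<in> {lam. \<exists>X. sdp_feasible n S lam X}" and lam: "0 < lam"
  then obtain X where X: "sdp_feasible n S lam X" by blast
  note \<phi> = feasible_imp_cp_admissible[OF assms(2) lam X]
  have "opnorm n (map_of_choi n (complex_of_real (inverse lam) \<cdot>\<^sub>m X + Delta n) (1\<^sub>m n)) = inverse lam"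
    using \<phi>(2) opnorm_scalar[OF assms(1)] lam by (simp add: norm_inverse)
  then show "inverse lam \<in> {opnorm n (\<phi> (1\<^sub>m n)) | \<phi>. cp_admissible n S \<phi>}"
    using \<phi>(1) by force
next
  show "inverse (real n ^ 2) \<in> {lam. \<exists>X. sdp_feasible n S lam X}" "0 < inverse (real n ^ 2)"
    using feasible_inverse_square[OF assms] assms(1) by auto
qed

end
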